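(* For any vertex $i\in[n]$ (fixed as $n\to\infty$), $h_{n,2}(i)/\sqrt{\ln n}\to0$ in probability as $n\to\infty$.
   Context: Kingman's $n$-coalescent $(F_n,\dots,F_1)$: forests on $[n]$, rooted trees with edges directed towards roots; $F_n$ has no edges; for $2\le i\le n$, list the trees of $F_i$ as $T^{(i)}_1,\dots,T^{(i)}_i$ in increasing order of smallest label, choose $\{a_i,b_i\}$ uniformly among 2-subsets of $[i]$ and an independent fair bit $\xi_i$ (independent over $i$), and obtain $F_{i-1}$ by adding an edge between the roots of $T^{(i)}_{a_i},T^{(i)}_{b_i}$ directed towards the root of $T^{(i)}_{\min(a_i,b_i)}$ if $\xi_i=1$, towards the other root otherwise. $h_{F_j}(v)$ is the depth of $v$ in its tree in $F_j$; $h_n(v)=h_{F_1}(v)$; $h_{n,1}(v)=h_{F_{\lfloor\ln^2 n\rfloor}}(v)$; $h_{n,2}(v)=h_n(v)-h_{n,1}(v)$. *)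

theory Defs
  imports "HOL-Probability.Probability"
begin

text \<open>A forest on [n] = {1..n} is represented by a parent map
  par :: nat \<Rightarrow> nat option (None = v is a root); edges point from
  a vertex to its parent, i.e. towards the root.\<close>

type_synonym forest = "nat \<Rightarrow> nat option"

fun anc :: "forest \<Rightarrow> nat \<Rightarrow> nat \<Rightarrow> nat option" where
  "anc par 0 v = Some v"
| "anc par (Suc k) v = Option.bind (anc par k v) par"

definition depth :: "forest \<Rightarrow> nat \<Rightarrow> nat" where
  "depth par v = (LEAST k. par (the (anc par k v)) = None)"

definition root_of :: "forest \<Rightarrow> nat \<Rightarrow> nat" where
  "root_of par v = the (anc par (depth par v) v)"

definition min_labels :: "nat \<Rightarrow> forest \<Rightarrow> nat set" where
  "min_labels n par = {u \<in> {1..n}. \<forall>w \<in> {1..n}. root_of par w = root_of par u \<longrightarrow> u \<le> w}"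

definition tree_root :: "nat \<Rightarrow> forest \<Rightarrow> nat \<Rightarrow> nat" where
  "tree_root n par k = root_of par (sorted_list_of_set (min_labels n par) ! (k - 1))"

text \<open>One coalescence step with choice (a, b, xi), where a < b encodes the
  2-subset {a,b} and xi = True encodes the bit value 1.\<close>
definition coal_step :: "nat \<Rightarrow> forest \<Rightarrow> nat \<times> nat \<times> bool \<Rightarrow> forest" where
  "coal_step n par c = (case c of (a, b, xi) \<Rightarrow>
     (let ra = tree_root n par (min a b); rb = tree_root n par (max a b) in
      if xi then par(rb := Some ra) else par(ra := Some rb)))"

text \<open>coal n ch k = F_{n-k}, given the choices ch i for 2 \<le> i \<le> n.\<close>
fun coal :: "nat \<Rightarrow> (nat \<Rightarrow> nat \<times> nat \<times> bool) \<Rightarrow> nat \<Rightarrow> forest" where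
  "coal n ch 0 = (\<lambda>_. None)"
| "coal n ch (Suc k) = coal_step n (coal n ch k) (ch (n - k))"

definition F :: "nat \<Rightarrow> (nat \<Rightarrow> nat \<times> nat \<times> bool) \<Rightarrow> nat \<Rightarrow> forest" where
  "F n ch j = coal n ch (n - j)"

definition choice_pmf :: "nat \<Rightarrow> (nat \<times> nat \<times> bool) pmf" where
  "choice_pmf i = pmf_of_set {(a, b, xi). 1 \<le> a \<and> a < b \<and> b \<le> i}"

definition choices :: "nat \<Rightarrow> (nat \<Rightarrow> nat \<times> nat \<times> bool) pmf" where
  "choices n = Pi_pmf {2..n} (0, 0, False) choice_pmf"

definition h_n :: "nat \<Rightarrow> (nat \<Rightarrow> nat \<times> nat \<times> bool) \<Rightarrow> nat \<Rightarrow> nat" where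
  "h_n n ch v = depth (F n ch 1) v"

definition h_n1 :: "nat \<Rightarrow> (nat \<Rightarrow> nat \<times> nat \<times> bool) \<Rightarrow> nat \<Rightarrow> nat" where
  "h_n1 n ch v = depth (F n ch (nat \<lfloor>(ln (real n))^2\<rfloor>)) v"

definition h_n2 :: "nat \<Rightarrow> (nat \<Rightarrow> nat \<times> nat \<times> bool) \<Rightarrow> nat \<Rightarrow> real" where
  "h_n2 n ch v = real (h_n n ch v) - real (h_n1 n ch v)"

end

theory Submission
  imports Defs "HOL-Real_Asymp.Real_Asymp"
begin

text \<open>Between \<open>F\<^sub>L\<close> and \<open>F\<^sub>1\<close>, where \<open>L = \<lfloor>ln\<^sup>2 n\<rfloor>\<close>, the depth of \<open>i\<close> grows by one exactly at
  the steps \<open>j \<in> {2..L}\<close> at which the tree containing \<open>i\<close> is hung below the other chosen root.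
  The choice made at step \<open>j\<close> is independent of \<open>F\<^sub>j\<close> and picks a given tree to be hung with
  probability \<open>1/j\<close>, so the expected growth \<open>h\<^sub>n\<^sub>,\<^sub>2(i)\<close> is at most \<open>H\<^sub>L - 1 \<le> ln L \<le> 2 ln ln n\<close>.
  Markov's inequality then bounds \<open>P(h\<^sub>n\<^sub>,\<^sub>2(i) > \<epsilon> \<surd>ln n)\<close> by \<open>2 ln ln n / (\<epsilon> \<surd>ln n) \<rightarrow> 0\<close>.\<close>

lemma anc_None_mono:
  assumes "anc par k v = None" "k \<le> m"
  shows "anc par m v = None"
  using assms(2) by (induction m rule: dec_induct) (simp_all add: assms(1))

lemma anc_nonroot_before:
  assumes "anc par k v = Some r" "m < k"
  obtains x where "anc par m v = Some x" "par x \<noteq> None"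
proof -
  have "anc par (Suc m) v \<noteq> None"
    using anc_None_mono[of par "Suc m" v k] assms by auto
  then show thesis using that by (cases "anc par m v") auto
qed

lemma depth_root_of_eq:
  assumes "anc par k v = Some r" "par r = None"
  shows "depth par v = k" "root_of par v = r"
proof -
  show "depth par v = k" unfolding depth_def
  proof (rule Least_equality)
    show "par (the (anc par k v)) = None" using assms by simp
    show "k \<le> m" if "par (the (anc par m v)) = None" for m
      using anc_nonroot_before[OF assms(1), of m] that by fastforce
  qed
  then show "root_of par v = r" unfolding root_of_def using assms by simp
qed

lemma root_of_root: "par r = None \<Longrightarrow> root_of par r = r"
  using depth_root_of_eq[of par 0 r r] by simp

lemma anc_fun_upd_root:
  assumes "anc par k v = Some r" "par l = None" "m \<le> k"
  shows "anc (par(l := Some w)) m v = anc par m v"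
  using assms(3)
proof (induction m)
  case (Suc m)
  obtain x where "anc par m v = Some x" "par x \<noteq> None"
    using anc_nonroot_before[OF assms(1), of m] Suc.prems by auto
  with Suc assms(2) show ?case by auto
qed simp

lemma anc_fun_upd_root_reaches_root:
  assumes "anc par k v = Some r" "par r = None" "par l = None" "w \<noteq> l"
  shows "anc (par(l := Some w)) (k + (if r = l then 1 else 0)) v = Some (if r = l then w else r)"
  using anc_fun_upd_root[OF assms(1,3) order.refl, of w] assms(1) by auto

section \<open>Forests on \<open>[n]\<close> and their ordered trees\<close>

definition forest_roots :: "nat \<Rightarrow> forest \<Rightarrow> nat set" where
  "forest_roots n par = {r \<in> {1..n}. par r = None}"

definition forest_on :: "nat \<Rightarrow> nat \<Rightarrow> forest \<Rightarrow> bool" where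
  "forest_on n j par \<longleftrightarrow> (\<forall>v w. par v = Some w \<longrightarrow> w \<in> {1..n})
     \<and> (\<forall>v. \<exists>k r. anc par k v = Some r \<and> par r = None) \<and> card (forest_roots n par) = j"

lemma forest_on_anc_root_of:
  assumes "forest_on n j par"
  shows "anc par (depth par v) v = Some (root_of par v)" "par (root_of par v) = None"
proof -
  obtain k r where "anc par k v = Some r" "par r = None"
    using assms unfolding forest_on_def by blast
  with depth_root_of_eq[OF this] show "anc par (depth par v) v = Some (root_of par v)"
    "par (root_of par v) = None" by simp_all
qed

lemma root_of_in_forest_roots:
  assumes "forest_on n j par" "v \<in> {1..n}"
  shows "root_of par v \<in> forest_roots n par"
proof (cases "depth par v")
  case 0
  then show ?thesis
    using forest_on_anc_root_of[OF assms(1), of v] assms(2) by (auto simp: forest_roots_def)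
next
  case (Suc k)
  then obtain x where "par x = Some (root_of par v)"
    using forest_on_anc_root_of(1)[OF assms(1), of v] by (cases "anc par k v") auto
  then show ?thesis
    using assms(1) forest_on_anc_root_of(2)[OF assms(1)]
    unfolding forest_on_def forest_roots_def by blast
qed

lemma bij_betw_root_of_min_labels:
  assumes "forest_on n j par"
  shows "bij_betw (root_of par) (min_labels n par) (forest_roots n par)"
  unfolding bij_betw_def
proof (intro conjI)
  show "inj_on (root_of par) (min_labels n par)"
    by (rule inj_onI) (auto simp: min_labels_def intro: order.antisym)
  show "root_of par ` min_labels n par = forest_roots n par"
  proof
    show "root_of par ` min_labels n par \<subseteq> forest_roots n par"
      using root_of_in_forest_roots[OF assms] by (auto simp: min_labels_def)
  next
    show "forest_roots n par \<subseteq> root_of par ` min_labels n par"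
    proof
      fix r assume r: "r \<in> forest_roots n par"
      define C where "C = {w \<in> {1..n}. root_of par w = r}"
      have "r \<in> C" using r root_of_root[of par r] unfolding C_def forest_roots_def by auto
      then have "finite C" "C \<noteq> {}" unfolding C_def by auto
      then have "Min C \<in> min_labels n par" "root_of par (Min C) = r"
        using Min_in[of C] unfolding min_labels_def C_def by auto
      then show "r \<in> root_of par ` min_labels n par" by blast
    qed
  qed
qed

lemma bij_betw_tree_root:
  assumes "forest_on n j par"
  shows "bij_betw (tree_root n par) {1..j} (forest_roots n par)"
proof -
  define xs where "xs = sorted_list_of_set (min_labels n par)"
  note roots = bij_betw_root_of_min_labels[OF assms]
  have "finite (min_labels n par)" by (rule finite_subset[of _ "{1..n}"]) (auto simp: min_labels_def)
  then have "length xs = j" "distinct xs" "set xs = min_labels n par"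
    using bij_betw_same_card[OF roots] assms unfolding xs_def forest_on_def by simp_all
  have shift: "bij_betw (\<lambda>k. k - 1) {1..j} {..<j}"
    by (rule bij_betw_byWitness[where f' = Suc]) auto
  have "bij_betw (\<lambda>k. xs ! (k - 1)) {1..j} (min_labels n par)"
    using bij_betw_trans[OF shift bij_betw_nth[of xs]] \<open>length xs = j\<close> \<open>distinct xs\<close> \<open>set xs = _\<close>
    by (simp add: comp_def)
  moreover have "tree_root n par = root_of par \<circ> (\<lambda>k. xs ! (k - 1))"
    by (simp add: fun_eq_iff tree_root_def xs_def)
  ultimately show ?thesis using bij_betw_trans[OF _ roots] by simp
qed

lemma forest_on_graft:
  assumes "forest_on n j par" "w \<in> forest_roots n par" "l \<in> forest_roots n par" "w \<noteq> l"
  shows "forest_on n (j - 1) (par(l := Some w))"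
    "depth (par(l := Some w)) v = depth par v + (if root_of par v = l then 1 else 0)"
proof -
  let ?par = "par(l := Some w)"
  have reach: "\<exists>r'. anc ?par (depth par v + (if root_of par v = l then 1 else 0)) v = Some r'
      \<and> ?par r' = None" for v
    using anc_fun_upd_root_reaches_root[OF forest_on_anc_root_of[OF assms(1), of v]] assms(2-4)
      forest_on_anc_root_of(2)[OF assms(1), of v]
    by (auto simp: forest_roots_def)
  then show "depth ?par v = depth par v + (if root_of par v = l then 1 else 0)"
    using depth_root_of_eq(1) by blast
  have "forest_roots n ?par = forest_roots n par - {l}"
    by (auto simp: forest_roots_def)
  then have "card (forest_roots n ?par) = j - 1"
    using assms(1,3) by (simp add: forest_on_def forest_roots_def)
  moreover have "\<forall>v. \<exists>k r. anc ?par k v = Some r \<and> ?par r = None"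
    using reach by blast
  ultimately show "forest_on n (j - 1) ?par"
    using assms(1,2) unfolding forest_on_def forest_roots_def by auto
qed

definition choice_set :: "nat \<Rightarrow> (nat \<times> nat \<times> bool) set" where
  "choice_set j = {(a, b, xi). 1 \<le> a \<and> a < b \<and> b \<le> j}"

definition attached_index :: "nat \<times> nat \<times> bool \<Rightarrow> nat" where
  "attached_index c = (case c of (a, b, xi) \<Rightarrow> if xi then b else a)"

definition tree_index :: "nat \<Rightarrow> forest \<Rightarrow> nat \<Rightarrow> nat \<Rightarrow> nat" where
  "tree_index n par j v = the_inv_into {1..j} (tree_root n par) (root_of par v)"

lemma attached_index_mem: "c \<in> choice_set j \<Longrightarrow> attached_index c \<in> {1..j}"
  by (auto simp: choice_set_def attached_index_def)

lemma tree_root_tree_index: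
  assumes "forest_on n j par" "v \<in> {1..n}"
  shows "tree_index n par j v \<in> {1..j}" "tree_root n par (tree_index n par j v) = root_of par v"
proof -
  note tree_roots = bij_betw_tree_root[OF assms(1)]
  obtain k where "k \<in> {1..j}" "tree_root n par k = root_of par v"
    using root_of_in_forest_roots[OF assms] bij_betw_imp_surj_on[OF tree_roots] by (metis imageE)
  moreover have "tree_index n par j v = k"
    using calculation the_inv_into_f_f[OF bij_betw_imp_inj_on[OF tree_roots]]
    unfolding tree_index_def by metis
  ultimately show "tree_index n par j v \<in> {1..j}"
    "tree_root n par (tree_index n par j v) = root_of par v" by simp_all
qed

lemma coal_step_eq_graft:
  assumes "forest_on n j par" "c \<in> choice_set j"
  obtains w where "coal_step n par c = par(tree_root n par (attached_index c) := Some w)"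
    "w \<in> forest_roots n par" "w \<noteq> tree_root n par (attached_index c)"
proof -
  obtain a b xi where c: "c = (a, b, xi)" "a \<in> {1..j}" "b \<in> {1..j}" "a < b"
    using assms(2) unfolding choice_set_def by auto
  note tree_roots = bij_betw_tree_root[OF assms(1)]
  have "tree_root n par a \<noteq> tree_root n par b"
    using c bij_betw_imp_inj_on[OF tree_roots] by (auto dest: inj_onD)
  moreover have "tree_root n par a \<in> forest_roots n par" "tree_root n par b \<in> forest_roots n par"
    using c bij_betw_apply[OF tree_roots] by auto
  ultimately show thesis
    using that[of "tree_root n par (if xi then a else b)"] c
    by (auto simp: coal_step_def attached_index_def Let_def min_def max_def)
qed

lemma forest_on_coal_step:
  assumes "forest_on n j par" "c \<in> choice_set j"
  shows "forest_on n (j - 1) (coal_step n par c)"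
proof -
  obtain w where "coal_step n par c = par(tree_root n par (attached_index c) := Some w)"
    "w \<in> forest_roots n par" "w \<noteq> tree_root n par (attached_index c)"
    using coal_step_eq_graft[OF assms] by blast
  with attached_index_mem[OF assms(2)] bij_betw_apply[OF bij_betw_tree_root[OF assms(1)]]
  show ?thesis using forest_on_graft(1)[OF assms(1)] by simp
qed

lemma depth_coal_step:
  assumes "forest_on n j par" "c \<in> choice_set j" "v \<in> {1..n}"
  shows "depth (coal_step n par c) v
    = depth par v + (if attached_index c = tree_index n par j v then 1 else 0)"
proof -
  note tree_roots = bij_betw_tree_root[OF assms(1)]
  have "root_of par v = tree_root n par (attached_index c) \<longleftrightarrow> attached_index c = tree_index n par j v"
    using tree_root_tree_index[OF assms(1,3)] attached_index_mem[OF assms(2)]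
      inj_on_eq_iff[OF bij_betw_imp_inj_on[OF tree_roots]] by metis
  moreover obtain w where "coal_step n par c = par(tree_root n par (attached_index c) := Some w)"
    "w \<in> forest_roots n par" "w \<noteq> tree_root n par (attached_index c)"
    using coal_step_eq_graft[OF assms(1,2)] by blast
  ultimately show ?thesis
    using attached_index_mem[OF assms(2)] bij_betw_apply[OF tree_roots] forest_on_graft(2)[OF assms(1)]
    by simp
qed

section \<open>Depth growth along the coalescent\<close>

definition valid_choices :: "nat \<Rightarrow> (nat \<Rightarrow> nat \<times> nat \<times> bool) \<Rightarrow> bool" where
  "valid_choices n ch \<longleftrightarrow> (\<forall>j\<in>{2..n}. ch j \<in> choice_set j)"

text \<open>The step \<open>F\<^sub>j \<rightarrow> F\<^sub>j\<^sub>-\<^sub>1\<close> hangs the tree containing \<open>v\<close> below another root,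
  so it is exactly the step at which the depth of \<open>v\<close> grows.\<close>

definition tree_attached :: "nat \<Rightarrow> (nat \<Rightarrow> nat \<times> nat \<times> bool) \<Rightarrow> nat \<Rightarrow> nat \<Rightarrow> bool" where
  "tree_attached n ch v j \<longleftrightarrow> attached_index (ch j) = tree_index n (F n ch j) j v"

lemma F_pred:
  assumes "1 \<le> j" "j \<le> n"
  shows "F n ch (j - 1) = coal_step n (F n ch j) (ch j)"
proof -
  have "n - (j - 1) = Suc (n - j)" "n - (n - j) = j" using assms by auto
  then show ?thesis by (simp add: F_def)
qed

lemma forest_on_F:
  assumes "valid_choices n ch" "1 \<le> j" "j \<le> n"
  shows "forest_on n j (F n ch j)"
  using assms(3)
proof (induction rule: inc_induct)
  case base
  have "\<exists>k r. anc (\<lambda>_. None) k v = Some r" for v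
    by (rule exI[of _ 0]) simp
  moreover have "forest_roots n (\<lambda>_. None) = {1..n}" by (auto simp: forest_roots_def)
  ultimately show ?case by (simp add: F_def forest_on_def)
next
  case (step m)
  then have "ch (Suc m) \<in> choice_set (Suc m)" using assms(1,2) by (simp add: valid_choices_def)
  with step F_pred[of "Suc m" n ch] show ?case
    using forest_on_coal_step by fastforce
qed

lemma depth_F_1:
  assumes "valid_choices n ch" "1 \<le> L" "L \<le> n" "v \<in> {1..n}"
  shows "depth (F n ch 1) v = depth (F n ch L) v + card {j \<in> {2..L}. tree_attached n ch v j}"
  using assms(2,3)
proof (induction L rule: dec_induct)
  case (step j)
  have "ch (Suc j) \<in> choice_set (Suc j)" using step assms(1) by (simp add: valid_choices_def)
  then have "depth (F n ch j) v = depth (F n ch (Suc j)) v + (if tree_attached n ch v (Suc j) then 1 else 0)"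
    using depth_coal_step[OF forest_on_F[OF assms(1)] _ assms(4), of "Suc j"] F_pred[of "Suc j" n ch] step
    by (simp add: tree_attached_def)
  moreover have "{i \<in> {2..Suc j}. tree_attached n ch v i}
      = (if tree_attached n ch v (Suc j) then insert (Suc j) else id) {i \<in> {2..j}. tree_attached n ch v i}"
    using step by (auto simp: le_Suc_eq)
  ultimately show ?case using step by simp
qed simp

lemma h_n2_eq_card:
  assumes "valid_choices n ch" "L = nat \<lfloor>(ln (real n))^2\<rfloor>" "1 \<le> L" "L \<le> n" "v \<in> {1..n}"
  shows "h_n2 n ch v = card {j \<in> {2..L}. tree_attached n ch v j}"
  using depth_F_1[OF assms(1,3-5)] assms(2) by (simp add: h_n2_def h_n_def h_n1_def)

section \<open>The probability that a given tree is attached\<close>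

lemma finite_choice_set: "finite (choice_set j)"
  by (rule finite_subset[of _ "{1..j} \<times> {1..j} \<times> UNIV"]) (auto simp: choice_set_def)

lemma choice_set_nonempty:
  assumes "2 \<le> j"
  shows "choice_set j \<noteq> {}"
proof -
  have "(1, 2, True) \<in> choice_set j" using assms by (simp add: choice_set_def)
  then show ?thesis by blast
qed

lemma card_choice_set: "card (choice_set j) = j * (j - 1)"
proof (induction j)
  case 0
  have "choice_set 0 = {}" by (auto simp: choice_set_def)
  then show ?case by simp
next
  case (Suc j)
  let ?new = "(\<lambda>(a, xi). (a, Suc j, xi)) ` ({1..j} \<times> (UNIV :: bool set))"
  have "choice_set (Suc j) = choice_set j \<union> ?new" "choice_set j \<inter> ?new = {}"
    by (auto simp: choice_set_def image_iff)
  moreover have "card ?new = j * 2"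
    by (subst card_image) (auto simp: inj_on_def card_cartesian_product)
  ultimately have "card (choice_set (Suc j)) = j * (j - 1) + j * 2"
    using Suc finite_choice_set by (simp add: card_Un_disjoint)
  then show ?case by (cases j) (simp_all add: algebra_simps)
qed

lemma card_attached_index_le: "card {c \<in> choice_set j. attached_index c = k} \<le> j - 1"
proof (cases "k \<in> {1..j}")
  case True
  have "{c \<in> choice_set j. attached_index c = k}
      \<subseteq> (\<lambda>a. (a, k, True)) ` {1..<k} \<union> (\<lambda>b. (k, b, False)) ` {k<..j}"
    by (auto simp: choice_set_def attached_index_def image_iff split: if_splits)
  then have "card {c \<in> choice_set j. attached_index c = k}
      \<le> card ((\<lambda>a. (a, k, True)) ` {1..<k} \<union> (\<lambda>b. (k, b, False)) ` {k<..j})"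
    by (intro card_mono) auto
  also have "\<dots> \<le> card {1..<k} + card {k<..j}"
    by (intro card_Un_le[THEN order.trans] add_mono card_image_le) auto
  finally show ?thesis using True by simp
next
  case False
  then have "{c \<in> choice_set j. attached_index c = k} = {}"
    by (auto simp: choice_set_def attached_index_def split: if_splits)
  then show ?thesis by (metis card.empty zero_le)
qed

lemma choice_pmf_eq_pmf_of_set: "choice_pmf j = pmf_of_set (choice_set j)"
  by (simp add: choice_pmf_def choice_set_def)

lemma prob_attached_index_le:
  assumes "2 \<le> j"
  shows "measure_pmf.prob (choice_pmf j) {c. attached_index c = k} \<le> 1 / real j"
proof -
  have "measure_pmf.prob (choice_pmf j) {c. attached_index c = k}
      = real (card {c \<in> choice_set j. attached_index c = k}) / real (j * (j - 1))"
    using choice_set_nonempty[OF assms]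
    by (simp add: choice_pmf_eq_pmf_of_set measure_pmf_of_set finite_choice_set card_choice_set Int_def)
  also have "\<dots> \<le> real (j - 1) / real (j * (j - 1))"
    using card_attached_index_le[of j k] by (intro divide_right_mono) auto
  also have "\<dots> = 1 / real j" using assms by (simp add: of_nat_diff)
  finally show ?thesis .
qed

lemma prob_Pi_pmf_coordinate_le:
  assumes "finite A" "x \<in> A"
    and R: "\<And>f z. R (f(x := z)) = R f"
    and c: "\<And>f. measure_pmf.prob (p x) {y. R f y} \<le> c"
  shows "measure_pmf.prob (Pi_pmf A dflt p) {f. R f (f x)} \<le> c"
proof -
  define Q where "Q = Pi_pmf (A - {x}) dflt p"
  have c0: "0 \<le> c" using c[of undefined] measure_nonneg order_trans by blast
  have "Pi_pmf A dflt p = do {y \<leftarrow> p x; f \<leftarrow> Q; return_pmf (f(x := y))}"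
    unfolding Q_def using Pi_pmf_insert'[of "A - {x}" x dflt p] assms(1,2) by (simp add: insert_absorb)
  also have "\<dots> = do {f \<leftarrow> Q; y \<leftarrow> p x; return_pmf (f(x := y))}"
    by (rule bind_commute_pmf)
  finally have "emeasure (Pi_pmf A dflt p) {f. R f (f x)}
      = (\<integral>\<^sup>+f. \<integral>\<^sup>+y. indicator {y. R f y} y \<partial>p x \<partial>Q)"
    by (simp add: R indicator_def)
  also have "\<dots> \<le> (\<integral>\<^sup>+f. ennreal c \<partial>Q)"
    by (intro nn_integral_mono) (simp add: measure_pmf.emeasure_eq_measure c ennreal_leI)
  finally show ?thesis
    by (simp add: measure_pmf.emeasure_eq_measure c0)
qed

lemma coal_fun_upd: "k \<le> n - j \<Longrightarrow> coal n (ch(j := y)) k = coal n ch k"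
  by (induction k) auto

lemma prob_tree_attached_le:
  assumes "j \<in> {2..n}"
  shows "measure_pmf.prob (choices n) {ch. tree_attached n ch v j} \<le> 1 / real j"
  unfolding choices_def tree_attached_def
proof (rule prob_Pi_pmf_coordinate_le[where R = "\<lambda>ch c. attached_index c = tree_index n (F n ch j) j v"])
  show "\<And>ch y. (\<lambda>c. attached_index c = tree_index n (F n (ch(j := y)) j) j v)
      = (\<lambda>c. attached_index c = tree_index n (F n ch j) j v)"
    by (simp add: F_def coal_fun_upd)
  show "\<And>ch. measure_pmf.prob (choice_pmf j) {c. attached_index c = tree_index n (F n ch j) j v} \<le> 1 / real j"
    using assms by (intro prob_attached_index_le) auto
qed (use assms in auto)

lemma valid_choices_of_set_pmf:
  assumes "ch \<in> set_pmf (choices n)"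
  shows "valid_choices n ch"
  using assms choice_set_nonempty set_Pi_pmf_subset'[of "{2..n}" "(0, 0, False)" choice_pmf]
  by (fastforce simp: choices_def valid_choices_def PiE_dflt_def choice_pmf_eq_pmf_of_set
      finite_choice_set)

section \<open>Markov's inequality and the harmonic sum\<close>

lemma prob_card_events_ge:
  fixes M :: "'a pmf" and E :: "'i \<Rightarrow> 'a set"
  assumes "finite J" "c > 0"
  shows "measure_pmf.prob M {x. c \<le> real (card {j \<in> J. x \<in> E j})}
    \<le> (\<Sum>j\<in>J. measure_pmf.prob M (E j)) / c"
proof -
  define u where "u x = (\<Sum>j\<in>J. indicator (E j) x :: real)" for x
  have u: "u x = real (card {j \<in> J. x \<in> E j})" for x
    using assms(1) by (simp add: u_def indicator_def sum.If_cases Int_def)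
  have int: "integrable M u"
    unfolding u_def
    by (intro Bochner_Integration.integrable_sum integrable_real_indicator)
      (auto simp: less_top[symmetric] measure_pmf.emeasure_finite)
  have "measure_pmf.prob M {x. c \<le> real (card {j \<in> J. x \<in> E j})}
      = measure M {x \<in> space M. c \<le> u x}"
    by (simp add: u)
  also have "\<dots> \<le> (\<integral>x. u x \<partial>M) / c"
    by (rule integral_Markov_inequality_measure[OF int _ _ assms(2)]) (auto simp: u_def sum_nonneg)
  also have "(\<integral>x. u x \<partial>M) = (\<Sum>j\<in>J. measure_pmf.prob M (E j))"
    unfolding u_def
    by (subst Bochner_Integration.integral_sum)
      (auto simp: less_top[symmetric] measure_pmf.emeasure_finite)
  finally show ?thesis .
qed

lemma sum_inverse_le_ln: "1 \<le> L \<Longrightarrow> (\<Sum>j = 2..L. 1 / real j) \<le> ln (real L)"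
proof -
  assume "1 \<le> L"
  then have "harm L - ln (real L) \<le> (harm 1 - ln 1 :: real)"
    using euler_mascheroni_sequence_decreasing[of 1 L] by simp
  moreover have "harm L = 1 + (\<Sum>j = 2..L. 1 / real j)"
    using \<open>1 \<le> L\<close> by (simp add: harm_def divide_inverse sum.atLeast_Suc_atMost numeral_2_eq_2)
  ultimately show ?thesis by (simp add: harm_def)
qed

lemma prob_h_n2_gt_le:
  assumes "\<epsilon> > 0" "1 \<le> ln (real n)" "(ln (real n))^2 \<le> real n" "v \<in> {1..n}"
  shows "measure_pmf.prob (choices n) {ch. \<bar>h_n2 n ch v / sqrt (ln (real n))\<bar> > \<epsilon>}
    \<le> ln ((ln (real n))^2) / (\<epsilon> * sqrt (ln (real n)))"
proof -
  define L where "L = nat \<lfloor>(ln (real n))^2\<rfloor>"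
  define s where "s = sqrt (ln (real n))"
  have "s > 0" using assms(2) by (simp add: s_def)
  then have "\<epsilon> * s > 0" using assms(1) by simp
  have "1 \<le> (ln (real n))^2" using assms(2) by (simp add: one_le_power)
  then have "1 \<le> L" "L \<le> n" "real L \<le> (ln (real n))^2"
    using assms(3) unfolding L_def by linarith+
  let ?A = "\<lambda>j. {ch. tree_attached n ch v j}"
  have "\<epsilon> * s \<le> real (card {j \<in> {2..L}. ch \<in> ?A j})"
    if "\<bar>h_n2 n ch v / s\<bar> > \<epsilon>" "ch \<in> set_pmf (choices n)" for ch
  proof -
    have "h_n2 n ch v = real (card {j \<in> {2..L}. ch \<in> ?A j})"
      using h_n2_eq_card[OF valid_choices_of_set_pmf[OF that(2)] L_def \<open>1 \<le> L\<close> \<open>L \<le> n\<close> assms(4)]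
      by simp
    with that(1) \<open>s > 0\<close> show ?thesis by (simp add: pos_less_divide_eq mult.commute)
  qed
  then have "{ch. \<bar>h_n2 n ch v / s\<bar> > \<epsilon>} \<inter> set_pmf (choices n)
      \<subseteq> {ch. \<epsilon> * s \<le> real (card {j \<in> {2..L}. ch \<in> ?A j})}"
    by blast
  then have "measure_pmf.prob (choices n) {ch. \<bar>h_n2 n ch v / s\<bar> > \<epsilon>}
      \<le> measure_pmf.prob (choices n) {ch. \<epsilon> * s \<le> real (card {j \<in> {2..L}. ch \<in> ?A j})}"
    by (subst measure_Int_set_pmf[symmetric]) (rule measure_pmf.finite_measure_mono, simp_all)
  also have "\<dots> \<le> (\<Sum>j = 2..L. measure_pmf.prob (choices n) (?A j)) / (\<epsilon> * s)"
    using \<open>\<epsilon> * s > 0\<close> by (intro prob_card_events_ge) simp_all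
  also have "\<dots> \<le> (\<Sum>j = 2..L. 1 / real j) / (\<epsilon> * s)"
    using \<open>\<epsilon> * s > 0\<close> \<open>L \<le> n\<close>
    by (intro divide_right_mono sum_mono prob_tree_attached_le) simp_all
  also have "\<dots> \<le> ln ((ln (real n))^2) / (\<epsilon> * s)"
  proof -
    have "ln (real L) \<le> ln ((ln (real n))^2)"
      using \<open>1 \<le> L\<close> \<open>real L \<le> _\<close> by (intro ln_mono) simp_all
    then show ?thesis
      using sum_inverse_le_ln[OF \<open>1 \<le> L\<close>] \<open>\<epsilon> * s > 0\<close> by (intro divide_right_mono) simp_all
  qed
  finally show ?thesis by (simp add: s_def)
qed

theorem lemma5p2:
  fixes i :: nat and \<epsilon> :: real
  assumes "1 \<le> i" and "\<epsilon> > 0"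
  shows "(\<lambda>n. measure_pmf.prob (choices n)
            {ch. \<bar>h_n2 n ch i / sqrt (ln (real n))\<bar> > \<epsilon>}) \<longlonglongrightarrow> 0"
proof (rule tendsto_sandwich[OF _ _ tendsto_const])
  show "eventually (\<lambda>n. 0 \<le> measure_pmf.prob (choices n)
      {ch. \<bar>h_n2 n ch i / sqrt (ln (real n))\<bar> > \<epsilon>}) sequentially"
    by simp
  have "eventually (\<lambda>n. 1 \<le> ln (real n)) sequentially"
    "eventually (\<lambda>n. (ln (real n))^2 \<le> real n) sequentially"
    by real_asymp+
  moreover have "eventually (\<lambda>n. i \<le> n) sequentially" by (rule eventually_ge_at_top)
  ultimately show "eventually (\<lambda>n. measure_pmf.prob (choices n)
      {ch. \<bar>h_n2 n ch i / sqrt (ln (real n))\<bar> > \<epsilon>}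
      \<le> ln ((ln (real n))^2) / (\<epsilon> * sqrt (ln (real n)))) sequentially"
    by eventually_elim (rule prob_h_n2_gt_le, use assms in auto)
  show "(\<lambda>n. ln ((ln (real n))^2) / (\<epsilon> * sqrt (ln (real n)))) \<longlonglongrightarrow> 0"
    using assms(2) by real_asymp
qed

end
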